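(* Let $k$ be a field of characteristic $0$ and let $d_1,\dots,d_n$ be positive integers with $t=\sum_{i=1}^n(d_i-1)$ odd. Let $X\subset\mathbb{P}^{n-1}(k)$ be the set of points represented by $(a_1,\dots,a_{n-1},1)$ with $a_i\in\{(d_i-1)-2j\mid 0\le j\le d_i-1\}$ for $1\le i\le n-1$ and such that $1+\sum_{i=1}^{n-1}a_i\in\{(d_n-1)-2j\mid 0\le j\le d_n-1\}$. Then $$|X|=\big[T^{\frac{t-1}{2}}\big]\frac{\prod_{i=1}^n(1-T^{d_i})}{(1-T)^n}.$$
   Context: For a power series $f$, $[T^a]f$ denotes the coefficient of $T^a$ in $f$. *)

theory Defs
  imports Complex_Main "HOL-Computational_Algebra.Formal_Power_Series"
begin

text \<open>Vectors of k^n are modelled as functions nat => 'k supported on {1..n}.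
  The projective point of P^(n-1)(k) represented by a nonzero vector v is its
  class under nonzero scaling.\<close>
definition proj_point :: "(nat \<Rightarrow> 'k::field) \<Rightarrow> (nat \<Rightarrow> 'k) set" where
  "proj_point v = {(\<lambda>i. c * v i) | c. c \<noteq> 0}"

definition vals :: "nat \<Rightarrow> int set" where
  "vals d = {int (d - 1) - 2 * int j | j. j \<le> d - 1}"

definition reps :: "nat \<Rightarrow> (nat \<Rightarrow> nat) \<Rightarrow> (nat \<Rightarrow> 'k::field_char_0) set" where
  "reps n d = {a. (\<forall>i. i \<notin> {1..n} \<longrightarrow> a i = 0) \<and> a n = 1 \<and>
      (\<forall>i\<in>{1..n-1}. \<exists>v\<in>vals (d i). a i = of_int v) \<and>
      (\<exists>v\<in>vals (d n). 1 + (\<Sum>i=1..n-1. a i) = of_int v)}"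

definition Xset :: "nat \<Rightarrow> (nat \<Rightarrow> nat) \<Rightarrow> (nat \<Rightarrow> 'k::field_char_0) set set" where
  "Xset n d = proj_point ` reps n d"

end

theory Submission
  imports Defs
begin

text \<open>Put \<open>b\<^sub>i = a\<^sub>i\<close> for \<open>i < n\<close> and \<open>b\<^sub>n = -(1 + \<Sum> a\<^sub>i)\<close>. Since every set of
  admissible values \<open>(d - 1) - 2j\<close> is symmetric about 0, the points of \<open>X\<close> correspond to the
  tuples \<open>b\<close> with \<open>b\<^sub>i\<close> admissible for \<open>d\<^sub>i\<close> and \<open>\<Sum> b\<^sub>i = -1\<close>. Substituting
  \<open>b\<^sub>i = 2 e\<^sub>i - (d\<^sub>i - 1)\<close> turns these into the tuples \<open>0 \<le> e\<^sub>i < d\<^sub>i\<close> with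
  \<open>\<Sum> e\<^sub>i = (t - 1)/2\<close>, which are counted by the coefficient of \<open>T\<^bsup>(t-1)/2\<^esup>\<close> in
  \<open>\<Prod> (1 + T + \<dots> + T\<^bsup>d\<^sub>i - 1\<^esup>) = \<Prod> (1 - T\<^bsup>d\<^sub>i\<^esup>) / (1 - T)\<^sup>n\<close>.\<close>

definition bounded_compositions :: "'i set \<Rightarrow> ('i \<Rightarrow> nat) \<Rightarrow> nat \<Rightarrow> ('i \<Rightarrow> nat) set" where
  "bounded_compositions I d N =
     {e. (\<forall>i. i \<notin> I \<longrightarrow> e i = 0) \<and> (\<forall>i\<in>I. e i < d i) \<and> sum e I = N}"

lemma finite_bounded_compositions:
  assumes "finite I"
  shows "finite (bounded_compositions I d N)"
proof (rule finite_subset)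
  show "bounded_compositions I d N \<subseteq> {e. \<forall>i. (i \<in> I \<longrightarrow> e i \<in> {..N}) \<and> (i \<notin> I \<longrightarrow> e i = 0)}"
    using member_le_sum[of _ I] assms by (fastforce simp: bounded_compositions_def)
  show "finite \<dots>"
    using assms by (intro finite_set_of_finite_funs) auto
qed

lemma bounded_compositions_empty:
  "bounded_compositions {} d N = (if N = 0 then {\<lambda>_. 0} else {})"
  by (auto simp: bounded_compositions_def)

lemma bounded_compositions_insert_fibre:
  assumes "finite I" "i \<notin> I" "k < d i" "k \<le> N"
  shows "{e \<in> bounded_compositions (insert i I) d N. e i = k} =
    (\<lambda>e. e(i := k)) ` bounded_compositions I d (N - k)"
proof (intro equalityI subsetI)
  fix e assume e: "e \<in> {e \<in> bounded_compositions (insert i I) d N. e i = k}"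
  have "sum (e(i := 0)) I = sum e I" using assms(2) by (intro sum.cong) auto
  then have "e(i := 0) \<in> bounded_compositions I d (N - k)"
    using e assms(1,2) by (auto simp: bounded_compositions_def)
  moreover have "e = (e(i := 0))(i := k)" using e by auto
  ultimately show "e \<in> (\<lambda>e. e(i := k)) ` bounded_compositions I d (N - k)" by blast
next
  fix e' assume "e' \<in> (\<lambda>e. e(i := k)) ` bounded_compositions I d (N - k)"
  then obtain e where e: "e \<in> bounded_compositions I d (N - k)" and e': "e' = e(i := k)" by blast
  have "sum e' I = sum e I" using assms(2) e' by (intro sum.cong) auto
  then show "e' \<in> {e \<in> bounded_compositions (insert i I) d N. e i = k}"
    using e e' assms by (auto simp: bounded_compositions_def)
qed

lemma card_bounded_compositions_insert:
  assumes "finite I" "i \<notin> I"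
  shows "card (bounded_compositions (insert i I) d N) =
    (\<Sum>k=0..N. (if k < d i then 1 else 0) * card (bounded_compositions I d (N - k)))"
proof -
  let ?C = "bounded_compositions (insert i I) d N"
  have "(\<lambda>e. e i) ` ?C \<subseteq> {0..N}"
  proof (rule image_subsetI)
    fix e assume "e \<in> ?C"
    then show "e i \<in> {0..N}"
      using member_le_sum[of i "insert i I" e] assms(1) by (simp add: bounded_compositions_def)
  qed
  then have "card ?C = (\<Sum>k=0..N. card {e \<in> ?C. e i = k})"
    using sum.group[of ?C "{0..N}" "\<lambda>e. e i" "\<lambda>_. 1::nat"] assms(1)
    by (simp add: finite_bounded_compositions)
  also have "\<dots> = (\<Sum>k=0..N. (if k < d i then 1 else 0) * card (bounded_compositions I d (N - k)))"
  proof (rule sum.cong[OF refl])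
    fix k assume "k \<in> {0..N}"
    show "card {e \<in> ?C. e i = k} = (if k < d i then 1 else 0) * card (bounded_compositions I d (N - k))"
    proof (cases "k < d i")
      case True
      have "inj_on (\<lambda>e. e(i := k)) (bounded_compositions I d (N - k))"
      proof (rule inj_onI)
        fix e e' assume "e \<in> bounded_compositions I d (N - k)" "e' \<in> bounded_compositions I d (N - k)"
          and eq: "e(i := k) = e'(i := k)"
        then have "e i = e' i" using assms(2) by (simp add: bounded_compositions_def)
        with eq show "e = e'" by (metis fun_upd_idem fun_upd_upd)
      qed
      moreover have "{e \<in> ?C. e i = k} = (\<lambda>e. e(i := k)) ` bounded_compositions I d (N - k)"
        using True \<open>k \<in> {0..N}\<close> by (intro bounded_compositions_insert_fibre assms) auto
      ultimately show ?thesis using True by (simp add: card_image)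
    next
      case False
      then have no_fibre: "{e \<in> ?C. e i = k} = {}"
        by (simp add: bounded_compositions_def)
      show ?thesis using False by (simp only: no_fibre card.empty) simp
    qed
  qed
  finally show ?thesis .
qed

lemma fps_nth_prod_geometric_sums:
  assumes "finite I"
  shows "fps_nth (\<Prod>i\<in>I. \<Sum>j<d i. fps_X ^ j :: 'a::comm_semiring_1 fps) N =
    of_nat (card (bounded_compositions I d N))"
  using assms
proof (induction I arbitrary: N rule: finite_induct)
  case empty
  then show ?case by (simp add: bounded_compositions_empty)
next
  case (insert i I)
  have "fps_nth (\<Sum>j<d i. fps_X ^ j :: 'a fps) k = of_nat (if k < d i then 1 else 0)" for k
    by (simp add: fps_sum_nth)
  with insert show ?case
    by (simp add: fps_mult_nth card_bounded_compositions_insert of_nat_sum)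
qed

lemma prod_one_minus_fps_X_power_div:
  "(\<Prod>i\<in>I. 1 - fps_X ^ d i) / (1 - fps_X) ^ card I = (\<Prod>i\<in>I. \<Sum>j<d i. fps_X ^ j :: 'a::field fps)"
proof -
  have "(\<Prod>i\<in>I. 1 - fps_X ^ d i) = (\<Prod>i\<in>I. \<Sum>j<d i. fps_X ^ j) * (1 - fps_X :: 'a fps) ^ card I"
    by (simp add: one_diff_power_eq prod.distrib mult.commute)
  moreover have "(1 - fps_X :: 'a fps) \<noteq> 0"
  proof
    assume "(1 - fps_X :: 'a fps) = 0"
    then have "fps_nth (1 - fps_X :: 'a fps) 0 = 0" by simp
    then show False by simp
  qed
  ultimately show ?thesis by simp
qed

lemma inj_on_proj_point: "inj_on proj_point {v :: nat \<Rightarrow> 'k::field. v n = 1}"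
proof (rule inj_onI)
  fix v w :: "nat \<Rightarrow> 'k" assume "v \<in> {v. v n = 1}" "w \<in> {v. v n = 1}" and eq: "proj_point v = proj_point w"
  have "v \<in> proj_point v" unfolding proj_point_def by (auto intro: exI[of _ 1])
  then obtain c where "v = (\<lambda>i. c * w i)" using eq by (auto simp: proj_point_def)
  moreover from this have "c = 1" using \<open>v \<in> {v. v n = 1}\<close> \<open>w \<in> {v. v n = 1}\<close> by simp
  ultimately show "v = w" by simp
qed

lemma card_Xset: "card (Xset n d :: (nat \<Rightarrow> 'k::field_char_0) set set) = card (reps n d :: (nat \<Rightarrow> 'k) set)"
  unfolding Xset_def
  by (rule card_image, rule inj_on_subset[OF inj_on_proj_point]) (auto simp: reps_def)

lemma vals_eq_image: "0 < d \<Longrightarrow> vals d = (\<lambda>e. 2 * int e - int (d - 1)) ` {..<d}"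
  unfolding vals_def
proof (intro equalityI subsetI)
  fix v assume "v \<in> {int (d - 1) - 2 * int j | j. j \<le> d - 1}" "0 < d"
  then obtain j where "j \<le> d - 1" "v = int (d - 1) - 2 * int j" by blast
  then show "v \<in> (\<lambda>e. 2 * int e - int (d - 1)) ` {..<d}"
    using \<open>0 < d\<close> by (intro image_eqI[of _ _ "d - 1 - j"]) auto
next
  fix v assume "v \<in> (\<lambda>e. 2 * int e - int (d - 1)) ` {..<d}" "0 < d"
  then obtain e where "e < d" "v = 2 * int e - int (d - 1)" by blast
  then show "v \<in> {int (d - 1) - 2 * int j | j. j \<le> d - 1}"
    by (intro CollectI exI[of _ "d - 1 - e"]) auto
qed

lemma uminus_mem_vals: "- v \<in> vals d \<longleftrightarrow> v \<in> vals d"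
proof -
  have "- v \<in> vals d" if "v \<in> vals d" for v
  proof -
    from that obtain j where "j \<le> d - 1" "v = int (d - 1) - 2 * int j" by (auto simp: vals_def)
    then show ?thesis unfolding vals_def by (intro CollectI exI[of _ "d - 1 - j"]) auto
  qed
  from this[of v] this[of "- v"] show ?thesis by auto
qed

definition vals_tuples :: "'i set \<Rightarrow> ('i \<Rightarrow> nat) \<Rightarrow> int \<Rightarrow> ('i \<Rightarrow> int) set" where
  "vals_tuples I d s = {b. (\<forall>i. i \<notin> I \<longrightarrow> b i = 0) \<and> (\<forall>i\<in>I. b i \<in> vals (d i)) \<and> sum b I = s}"

lemma card_vals_tuples:
  assumes "finite I" and d_pos: "\<forall>i\<in>I. 0 < d i"
  shows "card (vals_tuples I d (2 * int N - int (\<Sum>i\<in>I. d i - 1))) = card (bounded_compositions I d N)"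
proof -
  define f where "f e = (\<lambda>i. if i \<in> I then 2 * int (e i) - int (d i - 1) else 0)" for e :: "'a \<Rightarrow> nat"
  have sum_f: "sum (f e) I = 2 * int (sum e I) - int (\<Sum>i\<in>I. d i - 1)" for e
    by (simp add: f_def sum_subtractf sum_distrib_left)
  have "inj_on f (bounded_compositions I d N)"
  proof (rule inj_onI)
    fix e e' assume e: "e \<in> bounded_compositions I d N" and e': "e' \<in> bounded_compositions I d N"
      and eq: "f e = f e'"
    show "e = e'"
    proof
      fix i show "e i = e' i"
        using fun_cong[OF eq, of i] e e' by (cases "i \<in> I") (simp_all add: f_def bounded_compositions_def)
    qed
  qed
  moreover have "f ` bounded_compositions I d N = vals_tuples I d (2 * int N - int (\<Sum>i\<in>I. d i - 1))"
  proof (intro equalityI subsetI)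
    fix b assume "b \<in> f ` bounded_compositions I d N"
    then obtain e where "e \<in> bounded_compositions I d N" "b = f e" by blast
    then show "b \<in> vals_tuples I d (2 * int N - int (\<Sum>i\<in>I. d i - 1))"
      using d_pos sum_f by (auto simp: vals_tuples_def bounded_compositions_def vals_eq_image f_def)
  next
    fix b assume b: "b \<in> vals_tuples I d (2 * int N - int (\<Sum>i\<in>I. d i - 1))"
    then have "\<forall>i\<in>I. \<exists>k<d i. b i = 2 * int k - int (d i - 1)"
      using d_pos by (auto simp: vals_tuples_def vals_eq_image)
    then obtain e where e: "\<forall>i\<in>I. e i < d i \<and> b i = 2 * int (e i) - int (d i - 1)" by metis
    define e' where "e' i = (if i \<in> I then e i else 0)" for i
    have "f e' = b" using b e by (auto simp: f_def e'_def vals_tuples_def)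
    moreover have "sum e' I = N"
      using sum_f[of e'] b \<open>f e' = b\<close> by (simp add: vals_tuples_def flip: of_nat_sum)
    ultimately show "b \<in> f ` bounded_compositions I d N"
      using e by (auto simp: bounded_compositions_def e'_def)
  qed
  ultimately show ?thesis by (metis card_image)
qed

definition affine_chart :: "nat \<Rightarrow> (nat \<Rightarrow> int) \<Rightarrow> nat \<Rightarrow> 'k::ring_1" where
  "affine_chart n b = (\<lambda>i. if i \<in> {1..n-1} then of_int (b i) else if i = n then 1 else 0)"

lemma inj_on_affine_chart:
  assumes "1 \<le> n"
  shows "inj_on (affine_chart n :: _ \<Rightarrow> _ \<Rightarrow> 'k::ring_char_0) (vals_tuples {1..n} d s)"
proof (rule inj_onI)
  obtain m where n: "n = Suc m" using assms by (cases n) auto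
  fix b b' assume b: "b \<in> vals_tuples {1..n} d s" and b': "b' \<in> vals_tuples {1..n} d s"
    and eq: "(affine_chart n b :: nat \<Rightarrow> 'k) = affine_chart n b'"
  have init: "b i = b' i" if "i \<in> {1..m}" for i
    using fun_cong[OF eq, of i] that by (simp add: affine_chart_def n)
  then have "sum b {1..m} = sum b' {1..m}" by (rule sum.cong[OF refl])
  then have last: "b n = b' n" using b b' by (simp add: vals_tuples_def n)
  show "b = b'"
  proof
    fix i
    consider "i \<in> {1..m}" | "i = n" | "i \<notin> {1..n}" by (fastforce simp: n)
    then show "b i = b' i"
      using init last b b' by cases (auto simp: vals_tuples_def)
  qed
qed

lemma affine_chart_image_vals_tuples:
  assumes "1 \<le> n"
  shows "affine_chart n ` vals_tuples {1..n} d (-1) = (reps n d :: (nat \<Rightarrow> 'k::field_char_0) set)"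
proof -
  obtain m where n: "n = Suc m" using assms by (cases n) auto
  have sum_split: "sum b {1..n} = sum b {1..m} + b n" for b :: "nat \<Rightarrow> int"
    by (simp add: n)
  show ?thesis
  proof (intro equalityI subsetI)
    fix a :: "nat \<Rightarrow> 'k" assume "a \<in> affine_chart n ` vals_tuples {1..n} d (-1)"
    then obtain b where b: "b \<in> vals_tuples {1..n} d (-1)" and a: "a = affine_chart n b" by blast
    have "1 + (\<Sum>i=1..m. a i) = of_int (1 + sum b {1..m})"
      by (simp add: a affine_chart_def n)
    also have "1 + sum b {1..m} = - b n"
      using b sum_split[of b] by (simp add: vals_tuples_def)
    finally have "1 + (\<Sum>i=1..m. a i) = of_int (- b n)" .
    moreover have "- b n \<in> vals (d n)"
      using b by (simp add: vals_tuples_def uminus_mem_vals n)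
    ultimately have "\<exists>v\<in>vals (d n). 1 + (\<Sum>i=1..n-1. a i) = of_int v"
      by (metis diff_Suc_1 n)
    then show "a \<in> reps n d"
      using b unfolding reps_def mem_Collect_eq
      by (intro conjI) (auto simp: vals_tuples_def a affine_chart_def n)
  next
    fix a :: "nat \<Rightarrow> 'k" assume a: "a \<in> reps n d"
    then have "\<forall>i\<in>{1..m}. \<exists>v\<in>vals (d i). a i = of_int v" by (simp add: reps_def n)
    then obtain v where v: "\<forall>i\<in>{1..m}. v i \<in> vals (d i) \<and> a i = of_int (v i)" by metis
    obtain w where w: "w \<in> vals (d n)" "1 + (\<Sum>i=1..m. a i) = of_int w"
      using a by (auto simp: reps_def n)
    define b where "b i = (if i \<in> {1..m} then v i else if i = n then - w else 0)" for i
    have "of_int (sum b {1..n}) = (\<Sum>i=1..m. a i) - (1 + (\<Sum>i=1..m. a i))"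
      using v by (simp add: sum_split b_def w(2)[symmetric] n)
    also have "\<dots> = of_int (-1)" by simp
    finally have "sum b {1..n} = -1" by (rule of_int_eq_iff[THEN iffD1])
    then have "b \<in> vals_tuples {1..n} d (-1)"
      using v w by (auto simp: vals_tuples_def b_def uminus_mem_vals n le_Suc_eq)
    moreover have "affine_chart n b = a"
      using a v by (auto simp: fun_eq_iff affine_chart_def b_def reps_def n)
    ultimately show "a \<in> affine_chart n ` vals_tuples {1..n} d (-1)" by blast
  qed
qed

lemma card_reps:
  assumes "1 \<le> n"
  shows "card (reps n d :: (nat \<Rightarrow> 'k::field_char_0) set) = card (vals_tuples {1..n} d (-1))"
  using card_image[OF inj_on_affine_chart[OF assms]] affine_chart_image_vals_tuples[OF assms]
  by metis

theorem mainTheorem8: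
  fixes n :: nat and d :: "nat \<Rightarrow> nat"
  assumes "n \<ge> 1"
    and "\<forall>i\<in>{1..n}. d i > 0"
    and "odd (\<Sum>i=1..n. d i - 1)"
  shows "(of_nat (card (Xset n d :: (nat \<Rightarrow> 'k::field_char_0) set set)) :: rat) =
    fps_nth ((\<Prod>i=1..n. (1 - fps_X ^ d i)) / (1 - fps_X) ^ n)
            (((\<Sum>i=1..n. d i - 1) - 1) div 2)"
proof -
  define t where "t = (\<Sum>i=1..n. d i - 1)"
  define N where "N = (t - 1) div 2"
  have "odd t" using assms(3) by (simp add: t_def)
  then have "2 * int N - int t = -1"
    unfolding N_def by presburger
  then have "card (Xset n d :: (nat \<Rightarrow> 'k) set set) = card (bounded_compositions {1..n} d N)"
    using assms(1,2) by (simp add: card_Xset card_reps card_vals_tuples[symmetric] t_def)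
  moreover have "(\<Prod>i=1..n. 1 - fps_X ^ d i) / (1 - fps_X) ^ n = (\<Prod>i=1..n. \<Sum>j<d i. fps_X ^ j :: rat fps)"
    using prod_one_minus_fps_X_power_div[of d "{1..n}"] by simp
  ultimately show ?thesis
    by (simp add: fps_nth_prod_geometric_sums N_def t_def)
qed

end
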